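(* Consider the Markowitz portfolio setting of the context with fixed return level $m\neq0$, and assume conditions MP1–MP4, with rates $r_1,r_2,r_3$ satisfying $\max(r_1,r_2,r_3)=o(1)$ as $n,p\to\infty$. In the first step choose $\lambda\ge C\big(\Delta_ps(r_2+r_3^2)+r_3\big)$ with $C>0$ a sufficiently large constant. If $sr_1+\Delta_ps^2(r_2+r_3^2)=o(1)$, then $\hat{\mathbf w}$ is ratio consistent, i.e. $R(\hat{\mathbf w})/R(\mathbf w^* )\to1$ in probability as $n,p\to\infty$.
   Context: Let $\mathbf x_1,\dots,\mathbf x_n$ be observations from a stationary $p$-dimensional time series with mean $\boldsymbol\mu$ and invertible covariance matrix $\Sigma=(\sigma_{jk})$ (asymptotics along a sequence with $n,p\to\infty$). Let $\boldsymbol\theta=\Sigma^{-1}\boldsymbol\mu$, $\Delta_p=\boldsymbol\mu^\top\Sigma^{-1}\boldsymbol\mu>0$, $\mathbf w^*=m\boldsymbol\theta/\Delta_p$ (the minimizer of $\mathbf w^\top\Sigma\mathbf w$ subject to $\mathbf w^\top\boldsymbol\mu=m$), and $R(\mathbf w)=\mathbf w^\top\Sigma\mathbf w$, so $R(\mathbf w^* )=m^2/\Delta_p$. Let $\bar{\mathbf x}=n^{-1}\sum_i\mathbf x_i$, $\hat S_n=n^{-1}\sum_{i=1}^n(\mathbf x_i-\bar{\mathbf x})(\mathbf x_i-\bar{\mathbf x})^\top$, $\check S_n=n^{-1}\sum_{i=1}^n(\mathbf x_i-\boldsymbol\mu)(\mathbf x_i-\boldsymbol\mu)^\top$. Estimator: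 $\hat{\boldsymbol\theta}$ is a solution of $\min_{\boldsymbol\eta}|\boldsymbol\eta|_1$ subject to $|\hat S_n\boldsymbol\eta-\bar{\mathbf x}|_\infty\le\lambda$; then $\hat\Delta_{p,n}=\bar{\mathbf x}^\top\hat{\boldsymbol\theta}$ and $\hat{\mathbf w}=m\hat{\boldsymbol\theta}/\hat\Delta_{p,n}$. For a matrix $M$, $|M|_\infty=\max_{j,k}|m_{jk}|$; $|\mathbf v|_0$ is the number of nonzero entries. Conditions: MP1: $|\mathbf w^*|_0\le s$ and $|\mathbf w^*|_\infty\le C_w$ for a constant $C_w>0$. MP2: $|\check S_n-\Sigma|_\infty=O_{\mathbb P}(r_2)$ and $|\bar{\mathbf x}-\boldsymbol\mu|_\infty=O_{\mathbb P}(r_3)$. MP3: for constants $K_1,K_2,C>0$, $|\mu_j|\le K_1$, $\sigma_{jj}\le K_2$ for all $j$, and $R(\mathbf w^* )\le C$. MP4: the estimator $\hat{\boldsymbol\theta}$ satisfies $|\hat{\boldsymbol\theta}-\boldsymbol\theta|_1=O_{\mathbb P}(r_1)$. *)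

theory Defs
  imports "HOL-Probability.Probability"
begin

text \<open>Vectors in R^p are functions nat => real (only indices < p matter);
  p x p matrices are functions nat => nat => real (only indices < p matter).
  Data: X i omega j is coordinate j of observation x_i (i < n) at sample point omega.\<close>

definition l1norm :: "nat \<Rightarrow> (nat \<Rightarrow> real) \<Rightarrow> real" where
  "l1norm p v = (\<Sum>j<p. \<bar>v j\<bar>)"

definition supnorm :: "nat \<Rightarrow> (nat \<Rightarrow> real) \<Rightarrow> real" where
  "supnorm p v = Max (insert 0 ((\<lambda>j. \<bar>v j\<bar>) ` {..<p}))"

definition l0norm :: "nat \<Rightarrow> (nat \<Rightarrow> real) \<Rightarrow> nat" where
  "l0norm p v = card {j. j < p \<and> v j \<noteq> 0}"

definition mat_supnorm :: "nat \<Rightarrow> (nat \<Rightarrow> nat \<Rightarrow> real) \<Rightarrow> real" where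
  "mat_supnorm p A = Max (insert 0 ((\<lambda>(j,l). \<bar>A j l\<bar>) ` ({..<p} \<times> {..<p})))"

definition dotp :: "nat \<Rightarrow> (nat \<Rightarrow> real) \<Rightarrow> (nat \<Rightarrow> real) \<Rightarrow> real" where
  "dotp p u v = (\<Sum>j<p. u j * v j)"

definition matvec :: "nat \<Rightarrow> (nat \<Rightarrow> nat \<Rightarrow> real) \<Rightarrow> (nat \<Rightarrow> real) \<Rightarrow> (nat \<Rightarrow> real)" where
  "matvec p A v = (\<lambda>j. \<Sum>l<p. A j l * v l)"

text \<open>Quadratic form w^T A w, i.e. the risk R(w) when A = Sigma.\<close>
definition quadf :: "nat \<Rightarrow> (nat \<Rightarrow> nat \<Rightarrow> real) \<Rightarrow> (nat \<Rightarrow> real) \<Rightarrow> real" where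
  "quadf p A w = (\<Sum>j<p. \<Sum>l<p. w j * A j l * w l)"

definition xbar :: "nat \<Rightarrow> (nat \<Rightarrow> 'a \<Rightarrow> nat \<Rightarrow> real) \<Rightarrow> 'a \<Rightarrow> nat \<Rightarrow> real" where
  "xbar n X \<omega> j = (\<Sum>i<n. X i \<omega> j) / real n"

definition Shat :: "nat \<Rightarrow> (nat \<Rightarrow> 'a \<Rightarrow> nat \<Rightarrow> real) \<Rightarrow> 'a \<Rightarrow> nat \<Rightarrow> nat \<Rightarrow> real" where
  "Shat n X \<omega> j l = (\<Sum>i<n. (X i \<omega> j - xbar n X \<omega> j) * (X i \<omega> l - xbar n X \<omega> l)) / real n"

definition Scheck :: "nat \<Rightarrow> (nat \<Rightarrow> 'a \<Rightarrow> nat \<Rightarrow> real) \<Rightarrow> (nat \<Rightarrow> real) \<Rightarrow> 'a \<Rightarrow> nat \<Rightarrow> nat \<Rightarrow> real" where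
  "Scheck n X mu \<omega> j l = (\<Sum>i<n. (X i \<omega> j - mu j) * (X i \<omega> l - mu l)) / real n"

definition dantzig_feasible :: "nat \<Rightarrow> (nat \<Rightarrow> nat \<Rightarrow> real) \<Rightarrow> (nat \<Rightarrow> real) \<Rightarrow> real \<Rightarrow> (nat \<Rightarrow> real) \<Rightarrow> bool" where
  "dantzig_feasible p S b lam eta \<longleftrightarrow> supnorm p (\<lambda>j. matvec p S eta j - b j) \<le> lam"

definition dantzig_solution :: "nat \<Rightarrow> (nat \<Rightarrow> nat \<Rightarrow> real) \<Rightarrow> (nat \<Rightarrow> real) \<Rightarrow> real \<Rightarrow> (nat \<Rightarrow> real) \<Rightarrow> bool" where
  "dantzig_solution p S b lam eta \<longleftrightarrow> dantzig_feasible p S b lam eta \<and>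
     (\<forall>eta'. dantzig_feasible p S b lam eta' \<longrightarrow> l1norm p eta \<le> l1norm p eta')"

definition bigOP :: "'a measure \<Rightarrow> (nat \<Rightarrow> 'a \<Rightarrow> real) \<Rightarrow> (nat \<Rightarrow> real) \<Rightarrow> bool" where
  "bigOP M Z r \<longleftrightarrow> (\<forall>\<epsilon>>0. \<exists>B. \<exists>K. \<forall>k\<ge>K.
     measure M {\<omega> \<in> space M. \<bar>Z k \<omega>\<bar> > B * r k} < \<epsilon>)"

definition conv_in_prob :: "'a measure \<Rightarrow> (nat \<Rightarrow> 'a \<Rightarrow> real) \<Rightarrow> real \<Rightarrow> bool" where
  "conv_in_prob M Z c \<longleftrightarrow> (\<forall>\<epsilon>>0.
     (\<lambda>k. measure M {\<omega> \<in> space M. \<bar>Z k \<omega> - c\<bar> > \<epsilon>}) \<longlonglongrightarrow> 0)"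

end

theory Submission
  imports Defs
begin

text \<open>Write d = thetahat - theta. As R is a quadratic form, R(what) / R(w*) = a / b^2 with
  a = thetahat' Sigma thetahat / Delta and b = xbar' thetahat / Delta. Expanding around theta and using
  Sigma theta = mu gives |a - 1| <= (2 K1 |d|_1 + K2 |d|_1^2) / Delta and
  |b - 1| <= (|xbar - mu|_inf (|theta|_1 + |d|_1) + K1 |d|_1) / Delta, the entries of Sigma being bounded
  by K2 because a covariance is at most the mean of the two variances. MP1 gives
  |theta|_1 <= Delta s Cw / |m| and MP3 gives 1 / Delta <= C / m^2, so on the events where MP4 and MP2
  hold with fixed constants both deviations are O(r1 + s r3). Finally s r3 -> 0, since
  (s r3)^2 <= (C / m^2) Delta s^2 r3^2.\<close>

lemma supnorm_ge: "j < p \<Longrightarrow> \<bar>v j\<bar> \<le> supnorm p v"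
  unfolding supnorm_def by (intro Max_ge) auto

lemma supnorm_nonneg: "0 \<le> supnorm p v"
  unfolding supnorm_def by (intro Max_ge) auto

lemma l1norm_nonneg: "0 \<le> l1norm p v"
  unfolding l1norm_def by (simp add: sum_nonneg)

lemma l1norm_scale: "l1norm p (\<lambda>j. c * v j) = \<bar>c\<bar> * l1norm p v"
  unfolding l1norm_def by (simp add: abs_mult sum_distrib_left)

lemma l1norm_add_le: "l1norm p (\<lambda>j. u j + v j) \<le> l1norm p u + l1norm p v"
  unfolding l1norm_def by (simp add: sum.distrib[symmetric] sum_mono abs_triangle_ineq)

lemma l1norm_le_l0norm_mult_supnorm: "l1norm p v \<le> real (l0norm p v) * supnorm p v"
proof -
  let ?S = "{j. j < p \<and> v j \<noteq> 0}"
  have "l1norm p v = (\<Sum>j\<in>?S. \<bar>v j\<bar>)"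
    unfolding l1norm_def by (rule sum.mono_neutral_right) auto
  also have "\<dots> \<le> (\<Sum>j\<in>?S. supnorm p v)"
    by (intro sum_mono) (simp add: supnorm_ge)
  finally show ?thesis by (simp add: l0norm_def)
qed

lemma dotp_commute: "dotp p u v = dotp p v u"
  unfolding dotp_def by (simp add: mult.commute)

lemma abs_dotp_le:
  assumes "\<And>j. j < p \<Longrightarrow> \<bar>u j\<bar> \<le> K"
  shows "\<bar>dotp p u v\<bar> \<le> K * l1norm p v"
proof -
  have "\<bar>dotp p u v\<bar> \<le> (\<Sum>j<p. \<bar>u j\<bar> * \<bar>v j\<bar>)"
    unfolding dotp_def abs_mult[symmetric] by (rule sum_abs)
  also have "\<dots> \<le> (\<Sum>j<p. K * \<bar>v j\<bar>)"
    by (intro sum_mono mult_right_mono) (auto intro: assms)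
  finally show ?thesis by (simp add: l1norm_def sum_distrib_left)
qed

lemma abs_dotp_le_supnorm_l1norm: "\<bar>dotp p u v\<bar> \<le> supnorm p u * l1norm p v"
  by (rule abs_dotp_le) (rule supnorm_ge)

lemma abs_quadf_le:
  assumes "\<And>j l. j < p \<Longrightarrow> l < p \<Longrightarrow> \<bar>A j l\<bar> \<le> K"
  shows "\<bar>quadf p A d\<bar> \<le> K * (l1norm p d)\<^sup>2"
proof -
  have "\<bar>quadf p A d\<bar> \<le> (\<Sum>j<p. \<Sum>l<p. \<bar>d j * A j l * d l\<bar>)"
    unfolding quadf_def by (rule order_trans[OF sum_abs sum_mono[OF sum_abs]])
  also have "\<dots> \<le> (\<Sum>j<p. \<Sum>l<p. K * (\<bar>d j\<bar> * \<bar>d l\<bar>))"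
  proof (intro sum_mono)
    fix j l assume "j \<in> {..<p}" "l \<in> {..<p}"
    then have "\<bar>A j l\<bar> * (\<bar>d j\<bar> * \<bar>d l\<bar>) \<le> K * (\<bar>d j\<bar> * \<bar>d l\<bar>)"
      by (intro mult_right_mono assms) auto
    then show "\<bar>d j * A j l * d l\<bar> \<le> K * (\<bar>d j\<bar> * \<bar>d l\<bar>)"
      by (simp add: abs_mult ac_simps)
  qed
  also have "\<dots> = K * (l1norm p d)\<^sup>2"
    by (simp add: l1norm_def power2_eq_square sum_product sum_distrib_left ac_simps)
  finally show ?thesis .
qed

lemma quadf_scale: "quadf p A (\<lambda>j. c * w j) = c\<^sup>2 * quadf p A w"
  unfolding quadf_def by (simp add: sum_distrib_left power2_eq_square algebra_simps)

lemma quadf_eq_dotp_matvec: "quadf p A w = dotp p w (matvec p A w)"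
  unfolding quadf_def dotp_def matvec_def by (simp add: sum_distrib_left mult.assoc)

lemma quadf_add:
  assumes "\<And>j l. j < p \<Longrightarrow> l < p \<Longrightarrow> A j l = A l j"
  shows "quadf p A (\<lambda>j. t j + d j) = quadf p A t + 2 * dotp p d (matvec p A t) + quadf p A d"
proof -
  have swap: "(\<Sum>j<p. \<Sum>l<p. t j * A j l * d l) = (\<Sum>j<p. \<Sum>l<p. d j * A j l * t l)"
    by (subst sum.swap) (auto intro!: sum.cong simp: assms)
  have "quadf p A (\<lambda>j. t j + d j) = quadf p A t + (\<Sum>j<p. \<Sum>l<p. t j * A j l * d l)
      + (\<Sum>j<p. \<Sum>l<p. d j * A j l * t l) + quadf p A d"
    unfolding quadf_def by (simp add: sum.distrib algebra_simps)
  then show ?thesis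
    unfolding swap by (simp add: dotp_def matvec_def sum_distrib_left mult.assoc)
qed

lemma borel_measurable_l1norm[measurable]:
  "(\<And>j. (\<lambda>\<omega>. v \<omega> j) \<in> borel_measurable M) \<Longrightarrow> (\<lambda>\<omega>. l1norm p (v \<omega>)) \<in> borel_measurable M"
  unfolding l1norm_def by measurable

lemma supnorm_eq_Max_image: "supnorm p v = Max ((\<lambda>j. if j < p then \<bar>v j\<bar> else 0) ` {..p})"
proof -
  have "insert 0 ((\<lambda>j. \<bar>v j\<bar>) ` {..<p}) = (\<lambda>j. if j < p then \<bar>v j\<bar> else 0) ` {..p}"
    by (auto simp: image_iff less_Suc_eq_le[symmetric] intro: bexI[of _ p] bexI[of _ "_::nat"])
  then show ?thesis by (simp add: supnorm_def)
qed

lemma borel_measurable_supnorm[measurable]: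
  "(\<And>j. (\<lambda>\<omega>. v \<omega> j) \<in> borel_measurable M) \<Longrightarrow> (\<lambda>\<omega>. supnorm p (v \<omega>)) \<in> borel_measurable M"
  unfolding supnorm_eq_Max_image by (intro borel_measurable_Max) auto

lemma abs_covariance_le:
  fixes Y Z :: "'a \<Rightarrow> real"
  assumes "finite_measure M"
    and [measurable]: "Y \<in> borel_measurable M" "Z \<in> borel_measurable M"
    and "integrable M (\<lambda>\<omega>. (Y \<omega>)\<^sup>2)" "integrable M (\<lambda>\<omega>. (Z \<omega>)\<^sup>2)"
  shows "\<bar>\<integral>\<omega>. (Y \<omega> - a) * (Z \<omega> - b) \<partial>M\<bar>
     \<le> ((\<integral>\<omega>. (Y \<omega> - a) * (Y \<omega> - a) \<partial>M) + (\<integral>\<omega>. (Z \<omega> - b) * (Z \<omega> - b) \<partial>M)) / 2"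
proof -
  interpret finite_measure M by fact
  have centred_square_integrable: "integrable M (\<lambda>\<omega>. (W \<omega> - c) * (W \<omega> - c))"
    if W: "W \<in> borel_measurable M" and W2: "integrable M (\<lambda>\<omega>. (W \<omega>)\<^sup>2)"
    for W :: "'a \<Rightarrow> real" and c
  proof -
    have "integrable M W" by (rule square_integrable_imp_integrable[OF W W2])
    moreover have "(\<lambda>\<omega>. (W \<omega> - c) * (W \<omega> - c)) = (\<lambda>\<omega>. (W \<omega>)\<^sup>2 - 2 * c * W \<omega> + c\<^sup>2)"
      by (auto simp: power2_eq_square algebra_simps)
    ultimately show ?thesis using W2 by simp
  qed
  let ?U = "\<lambda>\<omega>. (Y \<omega> - a) * (Y \<omega> - a)" and ?V = "\<lambda>\<omega>. (Z \<omega> - b) * (Z \<omega> - b)"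
  let ?S = "\<lambda>\<omega>. (?U \<omega> + ?V \<omega>) / 2"
  have iU: "integrable M ?U" and iV: "integrable M ?V"
    using centred_square_integrable[OF assms(2,4)] centred_square_integrable[OF assms(3,5)] .
  then have iS: "integrable M ?S" by simp
  have "\<bar>u * v\<bar> \<le> (u * u + v * v) / 2" for u v :: real
  proof -
    have "0 \<le> (\<bar>u\<bar> - \<bar>v\<bar>)\<^sup>2" by simp
    then have "2 * (\<bar>u\<bar> * \<bar>v\<bar>) \<le> \<bar>u\<bar> * \<bar>u\<bar> + \<bar>v\<bar> * \<bar>v\<bar>"
      by (simp add: power2_eq_square algebra_simps)
    then show ?thesis by (simp add: abs_mult abs_mult_self_eq)
  qed
  then have amgm: "\<bar>(Y \<omega> - a) * (Z \<omega> - b)\<bar> \<le> ?S \<omega>" for \<omega> .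
  have "integrable M (\<lambda>\<omega>. (Y \<omega> - a) * (Z \<omega> - b))"
  proof (rule Bochner_Integration.integrable_bound[OF iS])
    show "AE \<omega> in M. norm ((Y \<omega> - a) * (Z \<omega> - b)) \<le> norm (?S \<omega>)"
      by (intro AE_I2) (simp only: real_norm_def; rule order_trans[OF amgm abs_ge_self])
  qed simp
  then have "(\<integral>\<omega>. \<bar>(Y \<omega> - a) * (Z \<omega> - b)\<bar> \<partial>M) \<le> integral\<^sup>L M ?S"
    using amgm iS by (intro integral_mono integrable_abs) auto
  then have "\<bar>\<integral>\<omega>. (Y \<omega> - a) * (Z \<omega> - b) \<partial>M\<bar> \<le> integral\<^sup>L M ?S"
    by (rule order_trans[OF integral_abs_bound])
  also have "\<dots> = (integral\<^sup>L M ?U + integral\<^sup>L M ?V) / 2"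
    using iU iV by simp
  finally show ?thesis .
qed

lemma abs_div_square_sub_one_le:
  fixes a b \<eta> :: real
  assumes "\<bar>a - 1\<bar> \<le> \<eta>" "\<bar>b - 1\<bar> \<le> \<eta>" "\<eta> \<le> 1/4"
  shows "\<bar>a / b\<^sup>2 - 1\<bar> \<le> 6 * \<eta>"
proof -
  have b: "3/4 \<le> b" "b \<le> 5/4" using assms by auto
  have b2: "9/16 \<le> b\<^sup>2" using power_mono[OF b(1), of 2] by (simp add: power2_eq_square)
  have "\<bar>1 - b\<^sup>2\<bar> = \<bar>1 - b\<bar> * \<bar>1 + b\<bar>"
    by (simp add: power2_eq_square abs_mult[symmetric] algebra_simps)
  also have "\<dots> \<le> \<eta> * (9/4)" using assms b by (intro mult_mono) auto
  finally have num: "\<bar>a - b\<^sup>2\<bar> \<le> \<eta> * (13/4)" using assms by linarith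
  have "a / b\<^sup>2 - 1 = (a - b\<^sup>2) / b\<^sup>2" using b(1) by (simp add: diff_divide_distrib)
  then have "\<bar>a / b\<^sup>2 - 1\<bar> = \<bar>a - b\<^sup>2\<bar> / b\<^sup>2" by simp
  also have "\<dots> \<le> (\<eta> * (13/4)) / (9/16)" using num b2 assms(1) by (intro frac_le) auto
  also have "\<dots> \<le> 6 * \<eta>" using assms(1) by simp
  finally show ?thesis .
qed

lemma quadf_perturbation:
  assumes sym: "\<And>j l. j < p \<Longrightarrow> l < p \<Longrightarrow> A j l = A l j"
    and A_le: "\<And>j l. j < p \<Longrightarrow> l < p \<Longrightarrow> \<bar>A j l\<bar> \<le> K2"
    and solves: "\<And>j. j < p \<Longrightarrow> matvec p A theta j = mu j"
    and mu_le: "\<And>j. j < p \<Longrightarrow> \<bar>mu j\<bar> \<le> K1"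
  shows "\<bar>quadf p A th - dotp p mu theta\<bar>
    \<le> 2 * K1 * l1norm p (\<lambda>j. th j - theta j) + K2 * (l1norm p (\<lambda>j. th j - theta j))\<^sup>2"
proof -
  define d where "d = (\<lambda>j. th j - theta j)"
  have Atheta: "dotp p v (matvec p A theta) = dotp p v mu" for v
    unfolding dotp_def by (intro sum.cong) (simp_all add: solves)
  have "quadf p A th = quadf p A (\<lambda>j. theta j + d j)"
    by (simp add: d_def)
  also have "\<dots> = dotp p mu theta + 2 * dotp p mu d + quadf p A d"
    using sym by (simp add: quadf_add quadf_eq_dotp_matvec[of p A theta] Atheta dotp_commute)
  finally have "\<bar>quadf p A th - dotp p mu theta\<bar> \<le> 2 * \<bar>dotp p mu d\<bar> + \<bar>quadf p A d\<bar>"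
    by simp
  also have "\<dots> \<le> 2 * (K1 * l1norm p d) + K2 * (l1norm p d)\<^sup>2"
    using abs_dotp_le[OF mu_le] abs_quadf_le[OF A_le] by (intro add_mono) auto
  finally show ?thesis by (simp add: d_def)
qed

lemma dotp_perturbation:
  assumes mu_le: "\<And>j. j < p \<Longrightarrow> \<bar>mu j\<bar> \<le> K1"
  shows "\<bar>dotp p xb th - dotp p mu theta\<bar>
    \<le> supnorm p (\<lambda>j. xb j - mu j) * l1norm p th + K1 * l1norm p (\<lambda>j. th j - theta j)"
proof -
  have "dotp p xb th - dotp p mu theta
      = dotp p (\<lambda>j. xb j - mu j) th + dotp p mu (\<lambda>j. th j - theta j)"
    unfolding dotp_def sum_subtractf[symmetric] sum.distrib[symmetric]
    by (intro sum.cong) (auto simp: algebra_simps)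
  then show ?thesis
    using abs_dotp_le_supnorm_l1norm[of p "\<lambda>j. xb j - mu j" th]
      abs_dotp_le[where p = p and u = mu and v = "\<lambda>j. th j - theta j", OF mu_le]
    by linarith
qed

lemma risk_ratio_eq:
  assumes "quadf p A theta = D" "D \<noteq> 0" "m \<noteq> 0"
  shows "quadf p A (\<lambda>j. m * th j / dotp p xb th) / quadf p A (\<lambda>j. m * theta j / D)
    = (quadf p A th / D) / (dotp p xb th / D)\<^sup>2"
proof -
  have scaled: "quadf p A (\<lambda>j. m * w j / c) = (m / c)\<^sup>2 * quadf p A w" for w c
    using quadf_scale[of p A "m / c" w] by (simp add: mult.commute)
  show ?thesis
    unfolding scaled using assms
    by (cases "dotp p xb th = 0") (simp_all add: field_simps power2_eq_square)
qed

lemma conv_in_prob_of_bigOP_bounds: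
  assumes "finite_measure M"
    and "bigOP M Z r" "bigOP M Z' r'"
    and [measurable]: "\<And>k. Z k \<in> borel_measurable M" "\<And>k. Z' k \<in> borel_measurable M"
    and bounds: "\<And>B B' \<epsilon>. \<epsilon> > 0 \<Longrightarrow> eventually (\<lambda>k. \<forall>\<omega>\<in>space M.
        \<bar>Z k \<omega>\<bar> \<le> B * r k \<longrightarrow> \<bar>Z' k \<omega>\<bar> \<le> B' * r' k \<longrightarrow> \<bar>Y k \<omega> - c\<bar> \<le> \<epsilon>) sequentially"
  shows "conv_in_prob M Y c"
  unfolding conv_in_prob_def
proof (intro allI impI LIMSEQ_I)
  interpret finite_measure M by fact
  fix \<epsilon> \<delta> :: real assume "\<epsilon> > 0" "\<delta> > 0"
  obtain B K where B: "\<And>k. k \<ge> K \<Longrightarrow> measure M {\<omega> \<in> space M. \<bar>Z k \<omega>\<bar> > B * r k} < \<delta> / 2"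
    using assms(2) \<open>\<delta> > 0\<close> unfolding bigOP_def by (meson half_gt_zero)
  obtain B' K' where B': "\<And>k. k \<ge> K' \<Longrightarrow> measure M {\<omega> \<in> space M. \<bar>Z' k \<omega>\<bar> > B' * r' k} < \<delta> / 2"
    using assms(3) \<open>\<delta> > 0\<close> unfolding bigOP_def by (meson half_gt_zero)
  obtain K'' where K'': "\<And>k \<omega>. k \<ge> K'' \<Longrightarrow> \<omega> \<in> space M \<Longrightarrow>
      \<bar>Z k \<omega>\<bar> \<le> B * r k \<Longrightarrow> \<bar>Z' k \<omega>\<bar> \<le> B' * r' k \<Longrightarrow> \<bar>Y k \<omega> - c\<bar> \<le> \<epsilon>"
    using bounds[OF \<open>\<epsilon> > 0\<close>, of B B'] unfolding eventually_sequentially by blast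
  show "\<exists>k0. \<forall>k\<ge>k0. norm (measure M {\<omega> \<in> space M. \<bar>Y k \<omega> - c\<bar> > \<epsilon>} - 0) < \<delta>"
  proof (intro exI allI impI)
    fix k assume k: "max K (max K' K'') \<le> k"
    have "{\<omega> \<in> space M. \<bar>Y k \<omega> - c\<bar> > \<epsilon>}
        \<subseteq> {\<omega> \<in> space M. \<bar>Z k \<omega>\<bar> > B * r k} \<union> {\<omega> \<in> space M. \<bar>Z' k \<omega>\<bar> > B' * r' k}"
      using K''[of k] k by (force simp: not_less)
    then have "measure M {\<omega> \<in> space M. \<bar>Y k \<omega> - c\<bar> > \<epsilon>}
        \<le> measure M {\<omega> \<in> space M. \<bar>Z k \<omega>\<bar> > B * r k} + measure M {\<omega> \<in> space M. \<bar>Z' k \<omega>\<bar> > B' * r' k}"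
      by (intro order_trans[OF finite_measure_mono measure_Un_le]) auto
    also have "\<dots> < \<delta>" using B[of k] B'[of k] k by simp
    finally show "norm (measure M {\<omega> \<in> space M. \<bar>Y k \<omega> - c\<bar> > \<epsilon>} - 0) < \<delta>" by simp
  qed
qed

locale markowitz_sequence =
  fixes M :: "'a measure" and n p s :: "nat \<Rightarrow> nat"
    and X :: "nat \<Rightarrow> nat \<Rightarrow> 'a \<Rightarrow> nat \<Rightarrow> real"
    and mu theta :: "nat \<Rightarrow> nat \<Rightarrow> real" and Sigma :: "nat \<Rightarrow> nat \<Rightarrow> nat \<Rightarrow> real"
    and m Cw K1 K2 C :: real
  assumes prob_space: "prob_space M"
    and X_meas: "\<And>k i j. (\<lambda>\<omega>. X k i \<omega> j) \<in> borel_measurable M"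
    and X_sq_int: "\<And>k i j. integrable M (\<lambda>\<omega>. (X k i \<omega> j)\<^sup>2)"
    and X_cov: "\<And>k i j l. i < n k \<Longrightarrow> j < p k \<Longrightarrow> l < p k \<Longrightarrow>
        (\<integral>\<omega>. (X k i \<omega> j - mu k j) * (X k i \<omega> l - mu k l) \<partial>M) = Sigma k j l"
    and theta_solves: "\<And>k j. j < p k \<Longrightarrow> matvec (p k) (Sigma k) (theta k) j = mu k j"
    and Delta_pos: "\<And>k. 0 < dotp (p k) (mu k) (theta k)"
    and m_nz: "m \<noteq> 0"
    and wstar_sparse: "\<And>k. l0norm (p k) (\<lambda>j. m * theta k j / dotp (p k) (mu k) (theta k)) \<le> s k"
    and wstar_le: "\<And>k. supnorm (p k) (\<lambda>j. m * theta k j / dotp (p k) (mu k) (theta k)) \<le> Cw"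
    and K_nonneg: "0 \<le> K1" "0 \<le> K2"
    and mu_le: "\<And>k j. j < p k \<Longrightarrow> \<bar>mu k j\<bar> \<le> K1"
    and Sigma_diag_le: "\<And>k j. j < p k \<Longrightarrow> Sigma k j j \<le> K2"
    and risk_wstar_le: "\<And>k. quadf (p k) (Sigma k) (\<lambda>j. m * theta k j / dotp (p k) (mu k) (theta k)) \<le> C"
    and C_pos: "0 < C"
begin

abbreviation Delta :: "nat \<Rightarrow> real" where
  "Delta k \<equiv> dotp (p k) (mu k) (theta k)"

abbreviation wstar :: "nat \<Rightarrow> nat \<Rightarrow> real" where
  "wstar k \<equiv> \<lambda>j. m * theta k j / Delta k"

lemma Sigma_sym: "0 < n k \<Longrightarrow> j < p k \<Longrightarrow> l < p k \<Longrightarrow> Sigma k j l = Sigma k l j"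
  using X_cov[of 0 k j l] X_cov[of 0 k l j] by (simp add: mult.commute)

lemma abs_Sigma_le:
  assumes "0 < n k" "j < p k" "l < p k"
  shows "\<bar>Sigma k j l\<bar> \<le> K2"
proof -
  have "\<bar>Sigma k j l\<bar> \<le> (Sigma k j j + Sigma k l l) / 2"
    using abs_covariance_le[OF prob_space.finite_measure[OF prob_space] X_meas[of k 0 j] X_meas[of k 0 l]
        X_sq_int[of k 0 j] X_sq_int[of k 0 l], of "mu k j" "mu k l"]
      X_cov[of 0 k j l] X_cov[of 0 k j j] X_cov[of 0 k l l] assms
    by simp
  also have "\<dots> \<le> K2" using Sigma_diag_le[of j k] Sigma_diag_le[of l k] assms by simp
  finally show ?thesis .
qed

lemma quadf_theta: "quadf (p k) (Sigma k) (theta k) = Delta k"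
  unfolding quadf_eq_dotp_matvec dotp_def by (intro sum.cong) (simp_all add: theta_solves mult.commute)

lemma risk_wstar: "quadf (p k) (Sigma k) (wstar k) = m\<^sup>2 / Delta k"
  using quadf_scale[of "p k" "Sigma k" "m / Delta k" "theta k"] Delta_pos[of k]
  by (simp add: quadf_theta power2_eq_square mult.commute)

lemma inverse_Delta_le: "1 / Delta k \<le> C / m\<^sup>2"
  using risk_wstar_le[of k] Delta_pos[of k] C_pos m_nz
  by (simp add: risk_wstar[unfolded] field_simps)

lemma l1norm_wstar_le: "l1norm (p k) (wstar k) \<le> s k * Cw"
proof -
  have "l1norm (p k) (wstar k) \<le> l0norm (p k) (wstar k) * supnorm (p k) (wstar k)"
    by (rule l1norm_le_l0norm_mult_supnorm)
  also have "\<dots> \<le> s k * supnorm (p k) (wstar k)"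
    using wstar_sparse[of k] supnorm_nonneg by (intro mult_right_mono) auto
  also have "\<dots> \<le> s k * Cw"
    using wstar_le[of k] by (intro mult_left_mono) auto
  finally show ?thesis .
qed

lemma l1norm_theta_le: "l1norm (p k) (theta k) \<le> Delta k * (s k * Cw / \<bar>m\<bar>)"
proof -
  have "l1norm (p k) (wstar k) = (\<bar>m\<bar> / Delta k) * l1norm (p k) (theta k)"
    using l1norm_scale[of "p k" "m / Delta k" "theta k"] Delta_pos[of k] by simp
  then have "l1norm (p k) (theta k) = (Delta k / \<bar>m\<bar>) * l1norm (p k) (wstar k)"
    using Delta_pos[of k] m_nz by simp
  also have "\<dots> \<le> (Delta k / \<bar>m\<bar>) * (s k * Cw)"
    using l1norm_wstar_le Delta_pos[of k] by (intro mult_left_mono) auto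
  finally show ?thesis by simp
qed

lemma abs_div_Delta_sub_one: "\<bar>x / Delta k - 1\<bar> = \<bar>x - Delta k\<bar> * (1 / Delta k)"
proof -
  have "x / Delta k - 1 = (x - Delta k) / Delta k"
    using Delta_pos[of k] by (simp add: diff_divide_distrib)
  then show ?thesis using Delta_pos[of k] by simp
qed

lemma risk_ratio_deviation:
  assumes "0 < n k"
    and E: "l1norm (p k) (\<lambda>j. th j - theta k j) \<le> E"
    and T: "supnorm (p k) (\<lambda>j. xb j - mu k j) \<le> T"
    and quadf_dev: "(2 * K1 * E + K2 * E\<^sup>2) * (C / m\<^sup>2) \<le> \<eta>"
    and dotp_dev: "T * (s k * Cw / \<bar>m\<bar>) + (T * E + K1 * E) * (C / m\<^sup>2) \<le> \<eta>"
    and "\<eta> \<le> 1/4"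
  shows "\<bar>quadf (p k) (Sigma k) (\<lambda>j. m * th j / dotp (p k) xb th) / quadf (p k) (Sigma k) (wstar k) - 1\<bar>
    \<le> 6 * \<eta>"
proof -
  have E0: "0 \<le> E" and T0: "0 \<le> T"
    using E T l1norm_nonneg supnorm_nonneg order_trans by blast+
  have "\<bar>quadf (p k) (Sigma k) th - Delta k\<bar> \<le> 2 * K1 * E + K2 * E\<^sup>2"
    using quadf_perturbation[of "p k" "Sigma k" K2 "theta k" "mu k" K1 th]
      Sigma_sym abs_Sigma_le theta_solves mu_le \<open>0 < n k\<close> E K_nonneg l1norm_nonneg
    by (smt (verit) mult_left_mono power_mono)
  then have a: "\<bar>quadf (p k) (Sigma k) th / Delta k - 1\<bar> \<le> \<eta>"
    unfolding abs_div_Delta_sub_one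
    using inverse_Delta_le[of k] Delta_pos[of k] quadf_dev
    by (smt (verit) mult_mono zero_le_divide_1_iff)
  have "l1norm (p k) th \<le> l1norm (p k) (theta k) + E"
    using l1norm_add_le[of "p k" "theta k" "\<lambda>j. th j - theta k j"] E by simp
  then have "\<bar>dotp (p k) xb th - Delta k\<bar> \<le> T * (Delta k * (s k * Cw / \<bar>m\<bar>) + E) + K1 * E"
    using dotp_perturbation[of "p k" "mu k" K1 xb th "theta k"] mu_le l1norm_theta_le[of k] T E
      supnorm_nonneg l1norm_nonneg K_nonneg T0
    by (smt (verit) mult_mono)
  then have "\<bar>dotp (p k) xb th / Delta k - 1\<bar>
      \<le> (T * (Delta k * (s k * Cw / \<bar>m\<bar>)) + (T * E + K1 * E)) * (1 / Delta k)"
    unfolding abs_div_Delta_sub_one using Delta_pos[of k]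
    by (intro mult_right_mono) (simp_all add: algebra_simps)
  also have "\<dots> = T * (s k * Cw / \<bar>m\<bar>) + (T * E + K1 * E) * (1 / Delta k)"
    using Delta_pos[of k] by (simp add: algebra_simps add_divide_distrib)
  also have "\<dots> \<le> T * (s k * Cw / \<bar>m\<bar>) + (T * E + K1 * E) * (C / m\<^sup>2)"
    using inverse_Delta_le[of k] T0 E0 K_nonneg by (intro add_left_mono mult_left_mono) auto
  finally have b: "\<bar>dotp (p k) xb th / Delta k - 1\<bar> \<le> \<eta>"
    using dotp_dev by linarith
  show ?thesis
    using abs_div_square_sub_one_le[OF a b \<open>\<eta> \<le> 1/4\<close>] Delta_pos[of k] m_nz
    by (simp add: risk_ratio_eq quadf_theta)
qed

lemma s_mult_r3_tendsto_zero:
  fixes r1 r2 r3 :: "nat \<Rightarrow> real"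
  assumes "\<And>k. 0 \<le> r1 k" "\<And>k. 0 \<le> r2 k" "\<And>k. 0 \<le> r3 k"
    and rate: "(\<lambda>k. s k * r1 k + Delta k * (real (s k))\<^sup>2 * (r2 k + (r3 k)\<^sup>2)) \<longlonglongrightarrow> 0"
  shows "(\<lambda>k. s k * r3 k) \<longlonglongrightarrow> 0"
proof (rule tendsto_sandwich)
  let ?g = "\<lambda>k. s k * r1 k + Delta k * (real (s k))\<^sup>2 * (r2 k + (r3 k)\<^sup>2)"
  have "s k * r3 k \<le> sqrt (C / m\<^sup>2 * ?g k)" for k
  proof (rule real_le_rsqrt)
    have "1 \<le> Delta k * (C / m\<^sup>2)"
      using inverse_Delta_le[of k] Delta_pos[of k] by (simp add: field_simps)
    then have "(s k * r3 k)\<^sup>2 \<le> C / m\<^sup>2 * (Delta k * (s k)\<^sup>2 * (r3 k)\<^sup>2)"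
      using mult_right_mono[of 1 "Delta k * (C / m\<^sup>2)" "(s k * r3 k)\<^sup>2"]
      by (simp add: power_mult_distrib ac_simps)
    also have "\<dots> \<le> C / m\<^sup>2 * ?g k"
      using assms(1-3)[of k] Delta_pos[of k] C_pos
      by (intro mult_left_mono) (simp_all add: algebra_simps)
    finally show "(s k * r3 k)\<^sup>2 \<le> C / m\<^sup>2 * ?g k" .
  qed
  then show "eventually (\<lambda>k. s k * r3 k \<le> sqrt (C / m\<^sup>2 * ?g k)) sequentially"
    by simp
  show "eventually (\<lambda>k. 0 \<le> s k * r3 k) sequentially"
    using assms(3) by simp
  show "(\<lambda>k. sqrt (C / m\<^sup>2 * ?g k)) \<longlonglongrightarrow> 0"
    using tendsto_real_sqrt[OF tendsto_mult_right_zero[OF rate, of "C / m\<^sup>2"]] by simp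
qed simp

lemma risk_ratio_eventually_close:
  fixes r1 r2 r3 :: "nat \<Rightarrow> real"
  assumes n_lim: "filterlim n at_top sequentially"
    and rates_nonneg: "\<And>k. 0 \<le> r1 k" "\<And>k. 0 \<le> r2 k" "\<And>k. 0 \<le> r3 k"
    and r1_lim: "r1 \<longlonglongrightarrow> 0" and r3_lim: "r3 \<longlonglongrightarrow> 0"
    and rate: "(\<lambda>k. s k * r1 k + Delta k * (real (s k))\<^sup>2 * (r2 k + (r3 k)\<^sup>2)) \<longlonglongrightarrow> 0"
    and "0 < \<epsilon>"
  shows "eventually (\<lambda>k. \<forall>th xb.
      l1norm (p k) (\<lambda>j. th j - theta k j) \<le> B * r1 k \<longrightarrow>
      supnorm (p k) (\<lambda>j. xb j - mu k j) \<le> B' * r3 k \<longrightarrow>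
      \<bar>quadf (p k) (Sigma k) (\<lambda>j. m * th j / dotp (p k) xb th) / quadf (p k) (Sigma k) (wstar k) - 1\<bar>
        \<le> \<epsilon>) sequentially"
proof -
  define \<eta> where "\<eta> = min (1/4) (\<epsilon> / 6)"
  define E where "E k = \<bar>B\<bar> * r1 k" for k
  define T where "T k = \<bar>B'\<bar> * r3 k" for k
  have E_lim: "E \<longlonglongrightarrow> 0" and T_lim: "T \<longlonglongrightarrow> 0"
    unfolding E_def T_def using tendsto_mult_right_zero r1_lim r3_lim by auto
  have "0 < \<eta>" using \<open>0 < \<epsilon>\<close> by (simp add: \<eta>_def)
  have "(\<lambda>k. (2 * K1 * E k + K2 * (E k)\<^sup>2) * (C / m\<^sup>2)) \<longlonglongrightarrow> (2 * K1 * 0 + K2 * 0\<^sup>2) * (C / m\<^sup>2)"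
    by (intro tendsto_intros E_lim)
  then have quadf_small: "eventually (\<lambda>k. (2 * K1 * E k + K2 * (E k)\<^sup>2) * (C / m\<^sup>2) < \<eta>) sequentially"
    using order_tendstoD(2) \<open>0 < \<eta>\<close> by force
  have "(\<lambda>k. \<bar>B'\<bar> * (s k * r3 k) * (Cw / \<bar>m\<bar>) + (T k * E k + K1 * E k) * (C / m\<^sup>2))
      \<longlonglongrightarrow> \<bar>B'\<bar> * 0 * (Cw / \<bar>m\<bar>) + (0 * 0 + K1 * 0) * (C / m\<^sup>2)"
    by (intro tendsto_intros E_lim T_lim s_mult_r3_tendsto_zero[OF rates_nonneg rate])
  then have dotp_small: "eventually (\<lambda>k. \<bar>B'\<bar> * (s k * r3 k) * (Cw / \<bar>m\<bar>)
      + (T k * E k + K1 * E k) * (C / m\<^sup>2) < \<eta>) sequentially"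
    using order_tendstoD(2) \<open>0 < \<eta>\<close> by force
  have "eventually (\<lambda>k. 0 < n k) sequentially"
    using n_lim unfolding filterlim_at_top by (auto elim: eventually_mono[OF spec[of _ 1]])
  then show ?thesis
    using quadf_small dotp_small
  proof eventually_elim
    case (elim k)
    have "B * r1 k \<le> E k" "B' * r3 k \<le> T k"
      unfolding E_def T_def using rates_nonneg by (simp_all add: mult_right_mono)
    have "\<bar>quadf (p k) (Sigma k) (\<lambda>j. m * th j / dotp (p k) xb th) / quadf (p k) (Sigma k) (wstar k) - 1\<bar>
        \<le> 6 * \<eta>"
      if "l1norm (p k) (\<lambda>j. th j - theta k j) \<le> B * r1 k"
        and "supnorm (p k) (\<lambda>j. xb j - mu k j) \<le> B' * r3 k" for th xb
    proof (rule risk_ratio_deviation[where E = "E k" and T = "T k"])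
      show "T k * (s k * Cw / \<bar>m\<bar>) + (T k * E k + K1 * E k) * (C / m\<^sup>2) \<le> \<eta>"
        using elim by (simp add: T_def ac_simps)
    qed (use elim that \<open>B * r1 k \<le> E k\<close> \<open>B' * r3 k \<le> T k\<close> in \<open>simp_all add: \<eta>_def\<close>)
    moreover have "6 * \<eta> \<le> \<epsilon>" by (simp add: \<eta>_def)
    ultimately show ?case by fastforce
  qed
qed

lemma ratio_consistent:
  fixes r1 r2 r3 :: "nat \<Rightarrow> real" and thetahat :: "nat \<Rightarrow> 'a \<Rightarrow> nat \<Rightarrow> real"
  assumes n_lim: "filterlim n at_top sequentially"
    and rates_nonneg: "\<And>k. 0 \<le> r1 k" "\<And>k. 0 \<le> r2 k" "\<And>k. 0 \<le> r3 k"
    and r1_lim: "r1 \<longlonglongrightarrow> 0" and r3_lim: "r3 \<longlonglongrightarrow> 0"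
    and rate: "(\<lambda>k. s k * r1 k + Delta k * (real (s k))\<^sup>2 * (r2 k + (r3 k)\<^sup>2)) \<longlonglongrightarrow> 0"
    and thetahat_meas: "\<And>k j. (\<lambda>\<omega>. thetahat k \<omega> j) \<in> borel_measurable M"
    and thetahat_rate: "bigOP M (\<lambda>k \<omega>. l1norm (p k) (\<lambda>j. thetahat k \<omega> j - theta k j)) r1"
    and xbar_rate: "bigOP M (\<lambda>k \<omega>. supnorm (p k) (\<lambda>j. xbar (n k) (X k) \<omega> j - mu k j)) r3"
  shows "conv_in_prob M (\<lambda>k \<omega>. quadf (p k) (Sigma k)
      (\<lambda>j. m * thetahat k \<omega> j / dotp (p k) (xbar (n k) (X k) \<omega>) (thetahat k \<omega>))
      / quadf (p k) (Sigma k) (wstar k)) 1"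
proof (rule conv_in_prob_of_bigOP_bounds[OF prob_space.finite_measure[OF prob_space]
      thetahat_rate xbar_rate])
  note [measurable] = X_meas thetahat_meas
  show "(\<lambda>\<omega>. l1norm (p k) (\<lambda>j. thetahat k \<omega> j - theta k j)) \<in> borel_measurable M" for k
    by measurable
  show "(\<lambda>\<omega>. supnorm (p k) (\<lambda>j. xbar (n k) (X k) \<omega> j - mu k j)) \<in> borel_measurable M" for k
    unfolding xbar_def by measurable
next
  fix B B' \<epsilon> :: real assume "0 < \<epsilon>"
  show "eventually (\<lambda>k. \<forall>\<omega>\<in>space M.
      \<bar>l1norm (p k) (\<lambda>j. thetahat k \<omega> j - theta k j)\<bar> \<le> B * r1 k \<longrightarrow>
      \<bar>supnorm (p k) (\<lambda>j. xbar (n k) (X k) \<omega> j - mu k j)\<bar> \<le> B' * r3 k \<longrightarrow>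
      \<bar>quadf (p k) (Sigma k) (\<lambda>j. m * thetahat k \<omega> j / dotp (p k) (xbar (n k) (X k) \<omega>) (thetahat k \<omega>))
        / quadf (p k) (Sigma k) (wstar k) - 1\<bar> \<le> \<epsilon>) sequentially"
    using risk_ratio_eventually_close[OF n_lim rates_nonneg r1_lim r3_lim rate \<open>0 < \<epsilon>\<close>, of B B']
    by eventually_elim (auto dest: abs_le_D1)
qed

end

theorem proposition1:
  fixes M :: "'a measure"
    and n p s :: "nat \<Rightarrow> nat"
    and X :: "nat \<Rightarrow> nat \<Rightarrow> 'a \<Rightarrow> nat \<Rightarrow> real"
    and mu theta :: "nat \<Rightarrow> nat \<Rightarrow> real"
    and Sigma :: "nat \<Rightarrow> nat \<Rightarrow> nat \<Rightarrow> real"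
    and m Cw K1 K2 C :: real
    and r1 r2 r3 :: "nat \<Rightarrow> real"
  defines "Delta \<equiv> \<lambda>k. dotp (p k) (mu k) (theta k)"
    and "wstar \<equiv> \<lambda>k j. m * theta k j / dotp (p k) (mu k) (theta k)"
  assumes M: "prob_space M"
    and n_lim: "filterlim n at_top sequentially"
    and p_lim: "filterlim p at_top sequentially"
    \<comment> \<open>data: observations x_1..x_n of a (weakly) stationary series with mean mu, covariance Sigma\<close>
    and X_meas: "\<And>k i j. (\<lambda>\<omega>. X k i \<omega> j) \<in> borel_measurable M"
    and X_sq_int: "\<And>k i j. integrable M (\<lambda>\<omega>. (X k i \<omega> j)\<^sup>2)"
    and X_mean: "\<And>k i j. i < n k \<Longrightarrow> j < p k \<Longrightarrow> integral\<^sup>L M (\<lambda>\<omega>. X k i \<omega> j) = mu k j"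
    and X_cov: "\<And>k i j l. i < n k \<Longrightarrow> j < p k \<Longrightarrow> l < p k \<Longrightarrow>
        integral\<^sup>L M (\<lambda>\<omega>. (X k i \<omega> j - mu k j) * (X k i \<omega> l - mu k l)) = Sigma k j l"
    \<comment> \<open>Sigma invertible, theta = Sigma^{-1} mu, Delta_p > 0, m \<noteq> 0\<close>
    and Sigma_inv: "\<And>k v. (\<forall>j<p k. matvec (p k) (Sigma k) v j = 0) \<Longrightarrow> (\<forall>j<p k. v j = 0)"
    and theta_def: "\<And>k j. j < p k \<Longrightarrow> matvec (p k) (Sigma k) (theta k) j = mu k j"
    and Delta_pos: "\<And>k. Delta k > 0"
    and m_nz: "m \<noteq> 0"
    \<comment> \<open>MP1\<close>
    and MP1_sparse: "\<And>k. l0norm (p k) (wstar k) \<le> s k"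
    and MP1_bound: "Cw > 0" "\<And>k. supnorm (p k) (wstar k) \<le> Cw"
    \<comment> \<open>MP2\<close>
    and MP2_S: "bigOP M (\<lambda>k \<omega>. mat_supnorm (p k)
                  (\<lambda>j l. Scheck (n k) (X k) (mu k) \<omega> j l - Sigma k j l)) r2"
    and MP2_x: "bigOP M (\<lambda>k \<omega>. supnorm (p k) (\<lambda>j. xbar (n k) (X k) \<omega> j - mu k j)) r3"
    \<comment> \<open>MP3\<close>
    and MP3: "K1 > 0" "K2 > 0" "C > 0"
      "\<And>k j. j < p k \<Longrightarrow> \<bar>mu k j\<bar> \<le> K1"
      "\<And>k j. j < p k \<Longrightarrow> Sigma k j j \<le> K2"
      "\<And>k. quadf (p k) (Sigma k) (wstar k) \<le> C"
    \<comment> \<open>rates\<close>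
    and rates_nonneg: "\<And>k. r1 k \<ge> 0" "\<And>k. r2 k \<ge> 0" "\<And>k. r3 k \<ge> 0"
    and rates_o1: "r1 \<longlonglongrightarrow> 0" "r2 \<longlonglongrightarrow> 0" "r3 \<longlonglongrightarrow> 0"
    and rate_cond: "(\<lambda>k. real (s k) * r1 k
                      + Delta k * (real (s k))\<^sup>2 * (r2 k + (r3 k)\<^sup>2)) \<longlonglongrightarrow> 0"
  shows "\<exists>C0>0. \<forall>(lam :: nat \<Rightarrow> real) (thetahat :: nat \<Rightarrow> 'a \<Rightarrow> nat \<Rightarrow> real).
           (\<forall>k. lam k \<ge> C0 * (Delta k * real (s k) * (r2 k + (r3 k)\<^sup>2) + r3 k))
           \<longrightarrow> (\<forall>k j. (\<lambda>\<omega>. thetahat k \<omega> j) \<in> borel_measurable M)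
           \<longrightarrow> (\<forall>k. \<forall>\<omega>\<in>space M.
                 (\<exists>eta. dantzig_feasible (p k) (Shat (n k) (X k) \<omega>) (xbar (n k) (X k) \<omega>) (lam k) eta)
                 \<longrightarrow> dantzig_solution (p k) (Shat (n k) (X k) \<omega>) (xbar (n k) (X k) \<omega>) (lam k)
                       (thetahat k \<omega>))
           \<longrightarrow> bigOP M (\<lambda>k \<omega>. l1norm (p k) (\<lambda>j. thetahat k \<omega> j - theta k j)) r1
           \<longrightarrow> conv_in_prob M
                 (\<lambda>k \<omega>. let Dhat = dotp (p k) (xbar (n k) (X k) \<omega>) (thetahat k \<omega>);
                             what = (\<lambda>j. m * thetahat k \<omega> j / Dhat)
                         in quadf (p k) (Sigma k) what / quadf (p k) (Sigma k) (wstar k)) 1"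
proof -
  interpret markowitz_sequence M n p s X mu theta Sigma m Cw K1 K2 C
    by (rule markowitz_sequence.intro)
      (use M X_meas X_sq_int X_cov theta_def Delta_pos m_nz MP1_sparse MP1_bound(2) MP3 in
        \<open>simp_all add: Delta_def wstar_def less_imp_le\<close>)
  have "conv_in_prob M (\<lambda>k \<omega>. quadf (p k) (Sigma k)
      (\<lambda>j. m * thetahat k \<omega> j / dotp (p k) (xbar (n k) (X k) \<omega>) (thetahat k \<omega>))
      / quadf (p k) (Sigma k) (wstar k)) 1"
    if "\<forall>k j. (\<lambda>\<omega>. thetahat k \<omega> j) \<in> borel_measurable M"
      and "bigOP M (\<lambda>k \<omega>. l1norm (p k) (\<lambda>j. thetahat k \<omega> j - theta k j)) r1"
    for thetahat :: "nat \<Rightarrow> 'a \<Rightarrow> nat \<Rightarrow> real"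
    using ratio_consistent[OF n_lim rates_nonneg rates_o1(1,3) rate_cond[unfolded Delta_def]] that MP2_x
    unfolding wstar_def by simp
  \<comment> \<open>The choice of lam and the Dantzig-selector property only serve to guarantee MP4,
    which is assumed directly; hence any constant C0 will do.\<close>
  then show ?thesis
    by (intro exI[of _ 1]) (simp add: Let_def)
qed

end
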